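(* For all integers $m\ge 2$ and $n\ge 1$, the stacked prism $Y_{2^m,n}$ is odd prime.
   Context: All graphs are finite and simple. A graph $G$ of order $N$ is odd prime if there is a bijection $\ell:V(G)\to\{1,3,\ldots,2N-1\}$ with $\gcd(\ell(u),\ell(v))=1$ for every edge $uv$. For $k\ge 3$, $n\ge 1$, the stacked prism $Y_{k,n}$ is the Cartesian product $C_k\,\square\,P_n$ of a $k$-cycle and a path on $n$ vertices: vertices $v_{i,j}$ ($1\le i\le n$, $1\le j\le k$), with edges $v_{i,j}v_{i,j+1}$ ($1\le j\le k-1$), $v_{i,k}v_{i,1}$ for each $i$, and $v_{i,j}v_{i+1,j}$ for $1\le i\le n-1$, $1\le j\le k$. *)

theory Defs
  imports Main
begin

definition odd_prime_graph :: "'a set \<Rightarrow> 'a set set \<Rightarrow> bool" where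
  "odd_prime_graph V E \<longleftrightarrow>
     (\<exists>l :: 'a \<Rightarrow> nat.
        bij_betw l V {x. odd x \<and> 1 \<le> x \<and> x \<le> 2 * card V - 1} \<and>
        (\<forall>u v. {u, v} \<in> E \<longrightarrow> gcd (l u) (l v) = 1))"

text \<open>Stacked prism Y_{k,n} = C_k x P_n: vertices (i,j) with 1 \<le> i \<le> n, 1 \<le> j \<le> k.\<close>

definition prism_vertices :: "nat \<Rightarrow> nat \<Rightarrow> (nat \<times> nat) set" where
  "prism_vertices k n = {1..n} \<times> {1..k}"

definition prism_edges :: "nat \<Rightarrow> nat \<Rightarrow> (nat \<times> nat) set set" where
  "prism_edges k n =
     {{(i, j), (i, j + 1)} | i j. 1 \<le> i \<and> i \<le> n \<and> 1 \<le> j \<and> j \<le> k - 1}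
   \<union> {{(i, k), (i, 1)} | i. 1 \<le> i \<and> i \<le> n}
   \<union> {{(i, j), (i + 1, j)} | i j. 1 \<le> i \<and> i \<le> n - 1 \<and> 1 \<le> j \<and> j \<le> k}"

end

theory Submission
  imports Defs
begin

text \<open>Number the vertices of Y_{2h,n} by 0, ..., 2hn - 1 row after row and give vertex
number y the label 2y + 1. Inside a row the numbers 0, 2, ..., 2h - 2, 2h - 1, 2h - 3, ..., 1
are placed once around the cycle, so cyclically adjacent vertices get numbers 1 or 2 apart,
while vertically adjacent vertices get numbers 2h apart. For 2h = 2^m all these gaps are
powers of two, and the labels 2y + 1 and 2y + 1 + 2^(t+1) are coprime because the first one
is odd.\<close>

definition power_of_two_apart :: "nat \<Rightarrow> nat \<Rightarrow> bool" where
  "power_of_two_apart a b \<longleftrightarrow> (\<exists>t. b = a + 2 ^ t \<or> a = b + 2 ^ t)"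

lemma power_of_two_apart_commute: "power_of_two_apart a b \<longleftrightarrow> power_of_two_apart b a"
  unfolding power_of_two_apart_def by blast

lemma power_of_two_apart_add_left: "power_of_two_apart (c + a) (c + b) \<longleftrightarrow> power_of_two_apart a b"
  unfolding power_of_two_apart_def by auto

lemma power_of_two_apart_add_power: "power_of_two_apart a (a + 2 ^ t)"
  unfolding power_of_two_apart_def by blast

lemma coprime_if_power_of_two_apart:
  assumes "power_of_two_apart a b"
  shows "coprime (2 * a + 1) (2 * b + 1)"
proof -
  have "coprime (2 * a + 1) (2 * a + 1 + 2 ^ Suc t)" for a t :: nat
  proof -
    have "coprime (2 * a + 1) (2 ^ Suc t)"
      by simp
    then show ?thesis
      by (simp only: coprime_iff_gcd_eq_1 gcd_add2)
  qed
  then show ?thesis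
    using assms unfolding power_of_two_apart_def by (auto simp: coprime_commute)
qed

lemma bij_betw_odd_numbers:
  "bij_betw (\<lambda>y. 2 * y + 1) {..<N} {x :: nat. odd x \<and> 1 \<le> x \<and> x \<le> 2 * N - 1}"
proof (rule bij_betw_imageI)
  show "inj_on (\<lambda>y. 2 * y + 1) {..<N}"
    by (simp add: inj_on_def)
  show "(\<lambda>y. 2 * y + 1) ` {..<N} = {x. odd x \<and> 1 \<le> x \<and> x \<le> 2 * N - 1}"
    by (auto elim!: oddE)
qed

lemma odd_prime_graphI:
  assumes "bij_betw f V {..<card V}"
    and "\<And>u v. {u, v} \<in> E \<Longrightarrow> coprime (2 * f u + 1) (2 * f v + 1)"
  shows "odd_prime_graph V E"
  unfolding odd_prime_graph_def
proof (intro exI conjI allI impI)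
  show "bij_betw (\<lambda>v. 2 * f v + 1) V {x. odd x \<and> 1 \<le> x \<and> x \<le> 2 * card V - 1}"
    using bij_betw_trans[OF assms(1) bij_betw_odd_numbers] by (simp add: comp_def)
  show "gcd (2 * f u + 1) (2 * f v + 1) = 1" if "{u, v} \<in> E" for u v
    using assms(2)[OF that] by (simp add: coprime_iff_gcd_eq_1)
qed

definition zigzag :: "nat \<Rightarrow> nat \<Rightarrow> nat" where
  "zigzag h j = (if j \<le> h then 2 * (j - 1) else 4 * h - 2 * j + 1)"

lemma zigzag_less: "1 \<le> j \<Longrightarrow> j \<le> 2 * h \<Longrightarrow> zigzag h j < 2 * h"
  unfolding zigzag_def by auto

lemma inj_on_zigzag: "inj_on (zigzag h) {1..2 * h}"
  unfolding inj_on_def zigzag_def by auto presburger+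

lemma power_of_two_apart_zigzag_Suc:
  assumes "1 \<le> j" "j < 2 * h"
  shows "power_of_two_apart (zigzag h j) (zigzag h (Suc j))"
proof -
  consider "j < h" | "j = h" | "h < j" by linarith
  then show ?thesis
  proof cases
    case 1
    then have "zigzag h (Suc j) = zigzag h j + 2 ^ 1"
      using assms unfolding zigzag_def by auto
    then show ?thesis by (simp only: power_of_two_apart_add_power)
  next
    case 2
    then have "zigzag h (Suc j) = zigzag h j + 2 ^ 0"
      using assms unfolding zigzag_def by auto
    then show ?thesis by (simp only: power_of_two_apart_add_power)
  next
    case 3
    then have "zigzag h j = zigzag h (Suc j) + 2 ^ 1"
      using assms unfolding zigzag_def by auto
    then show ?thesis by (simp only: power_of_two_apart_commute power_of_two_apart_add_power)
  qed
qed

lemma power_of_two_apart_zigzag_wrap: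
  assumes "1 \<le> h"
  shows "power_of_two_apart (zigzag h (2 * h)) (zigzag h 1)"
proof -
  have "zigzag h (2 * h) = zigzag h 1 + 2 ^ 0"
    using assms unfolding zigzag_def by auto
  then show ?thesis by (simp only: power_of_two_apart_commute power_of_two_apart_add_power)
qed

definition prism_index :: "nat \<Rightarrow> nat \<times> nat \<Rightarrow> nat" where
  "prism_index h p = 2 * h * (fst p - 1) + zigzag h (snd p)"

lemma card_prism_vertices: "card (prism_vertices k n) = n * k"
  unfolding prism_vertices_def by (simp add: card_cartesian_product)

lemma prism_index_div_mod:
  assumes "(i, j) \<in> prism_vertices (2 * h) n"
  shows "prism_index h (i, j) div (2 * h) = i - 1"
    and "prism_index h (i, j) mod (2 * h) = zigzag h j"
proof -
  have "zigzag h j < 2 * h"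
    using assms unfolding prism_vertices_def by (auto intro: zigzag_less)
  then show "prism_index h (i, j) div (2 * h) = i - 1" "prism_index h (i, j) mod (2 * h) = zigzag h j"
    unfolding prism_index_def by simp_all
qed

lemma inj_on_prism_index: "inj_on (prism_index h) (prism_vertices (2 * h) n)"
proof (rule inj_onI)
  fix p q
  assume "p \<in> prism_vertices (2 * h) n" "q \<in> prism_vertices (2 * h) n"
    and "prism_index h p = prism_index h q"
  moreover obtain i j i' j' where "p = (i, j)" "q = (i', j')"
    by fastforce
  ultimately have V: "(i, j) \<in> prism_vertices (2 * h) n" "(i', j') \<in> prism_vertices (2 * h) n"
    and eq: "prism_index h (i, j) = prism_index h (i', j')"
    by simp_all
  have "i - 1 = i' - 1" and zz: "zigzag h j = zigzag h j'"
    using prism_index_div_mod[OF V(1)] prism_index_div_mod[OF V(2)] unfolding eq by simp_all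
  moreover have "j = j'"
    using inj_onD[OF inj_on_zigzag zz] V unfolding prism_vertices_def by simp
  ultimately show "p = q"
    using V unfolding \<open>p = (i, j)\<close> \<open>q = (i', j')\<close> prism_vertices_def by auto
qed

lemma prism_index_less:
  assumes "(i, j) \<in> prism_vertices (2 * h) n"
  shows "prism_index h (i, j) < n * (2 * h)"
proof -
  from assms have i: "1 \<le> i" "i \<le> n" and "zigzag h j < 2 * h"
    unfolding prism_vertices_def by (auto intro: zigzag_less)
  then have "prism_index h (i, j) < 2 * h * (i - 1) + 2 * h"
    unfolding prism_index_def by simp
  also have "\<dots> = 2 * h * i"
    using i(1) by (cases i) simp_all
  also have "\<dots> \<le> n * (2 * h)"
    using i(2) by simp
  finally show ?thesis .
qed

lemma bij_betw_prism_index: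
  "bij_betw (prism_index h) (prism_vertices (2 * h) n) {..<card (prism_vertices (2 * h) n)}"
proof (rule bij_betw_imageI)
  let ?V = "prism_vertices (2 * h) n"
  show inj: "inj_on (prism_index h) ?V"
    by (rule inj_on_prism_index)
  have "prism_index h ` ?V \<subseteq> {..<card ?V}"
    using prism_index_less by (auto simp: card_prism_vertices)
  moreover have "card (prism_index h ` ?V) = card {..<card ?V}"
    using card_image[OF inj] by simp
  ultimately show "prism_index h ` ?V = {..<card ?V}"
    by (intro card_subset_eq) auto
qed

lemma prism_edges_cases:
  assumes "{u, v} \<in> prism_edges k n"
  obtains (cycle) i j where "1 \<le> j" "j < k" "{u, v} = {(i, j), (i, Suc j)}"
  | (wrap) i where "{u, v} = {(i, k), (i, 1)}"
  | (rung) i j where "1 \<le> i" "{u, v} = {(i, j), (Suc i, j)}"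
  using assms unfolding prism_edges_def by auto

lemma power_of_two_apart_prism_index:
  assumes "{u, v} \<in> prism_edges (2 * h) n" and "h = 2 ^ s"
  shows "power_of_two_apart (prism_index h u) (prism_index h v)"
  using assms(1)
proof (cases rule: prism_edges_cases)
  case (cycle i j)
  then have "power_of_two_apart (prism_index h (i, j)) (prism_index h (i, Suc j))"
    by (simp add: prism_index_def power_of_two_apart_add_left power_of_two_apart_zigzag_Suc)
  with cycle show ?thesis
    by (auto simp: doubleton_eq_iff power_of_two_apart_commute)
next
  case (wrap i)
  have "1 \<le> h"
    using assms(2) by simp
  then have "power_of_two_apart (prism_index h (i, 2 * h)) (prism_index h (i, 1))"
    using power_of_two_apart_zigzag_wrap by (simp add: prism_index_def power_of_two_apart_add_left)
  with wrap show ?thesis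
    by (auto simp: doubleton_eq_iff power_of_two_apart_commute)
next
  case (rung i j)
  then have "prism_index h (Suc i, j) = prism_index h (i, j) + 2 ^ Suc s"
    using assms(2) by (cases i) (auto simp: prism_index_def algebra_simps)
  then have "power_of_two_apart (prism_index h (i, j)) (prism_index h (Suc i, j))"
    by (simp only: power_of_two_apart_add_power)
  with rung show ?thesis
    by (auto simp: doubleton_eq_iff power_of_two_apart_commute)
qed

theorem theorem3p9:
  fixes m n :: nat
  assumes "m \<ge> 2" and "n \<ge> 1"
  shows "odd_prime_graph (prism_vertices (2 ^ m) n) (prism_edges (2 ^ m) n)"
proof -
  define h :: nat where "h = 2 ^ (m - 1)"
  have k: "2 ^ m = 2 * h"
    using assms(1) unfolding h_def by (cases m) auto
  show ?thesis
    unfolding k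
  proof (rule odd_prime_graphI)
    show "bij_betw (prism_index h) (prism_vertices (2 * h) n) {..<card (prism_vertices (2 * h) n)}"
      by (rule bij_betw_prism_index)
    show "coprime (2 * prism_index h u + 1) (2 * prism_index h v + 1)"
      if "{u, v} \<in> prism_edges (2 * h) n" for u v
      using that h_def by (intro coprime_if_power_of_two_apart power_of_two_apart_prism_index)
  qed
qed

end
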